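(* Let $A=(a_{ij}) \in \mathbb{R}^{m\times r}$, $B=(b_{ij}) \in \mathbb{R}^{r\times n}$, let $S \subseteq \mathbb{R}^n$ be an arbitrary subset, and for $\kappa\in\mathbb{R}^r_+$ let $f_\kappa\colon \mathbb{R}^n_+\to\mathbb{R}^m$, $f_\kappa(x)=A_\kappa\, x^B$. The following statements are equivalent: (inj) $f_\kappa$ is injective with respect to $S$, for all $\kappa \in \mathbb{R}^r_+$. (jac) $\ker(J_{f_\kappa}(x)) \cap S^* = \emptyset$ for all $\kappa \in \mathbb{R}^r_+$ and $x \in \mathbb{R}^n_+$, where $J_{f_\kappa}(x)$ is the Jacobian matrix of $f_\kappa$ at $x$. (lin) $\ker(A_\kappa B_\lambda) \cap S^* = \emptyset$ for all $\kappa \in \mathbb{R}^r_+$ and $\lambda\in \mathbb{R}^n_+$. (sig) $\sigma(\ker(A)) \cap \sigma(B(\Sigma(S^* ))) = \emptyset$.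
   Context: $\mathbb{R}_+$ denotes the strictly positive reals. For $x\in\mathbb{R}^n_+$ and $B\in\mathbb{R}^{r\times n}$ with rows $b_1,\dots,b_r$, $x^B\in\mathbb{R}^r_+$ is the vector with $(x^B)_j = x^{b_j}=x_1^{b_{j1}}\cdots x_n^{b_{jn}}$ (real exponents allowed). For $\kappa\in\mathbb{R}^r_+$, $A_\kappa = A\,\mathrm{diag}(\kappa)$; for $\lambda\in\mathbb{R}^n_+$, $B_\lambda = B\,\mathrm{diag}(\lambda)$. A function $g$ defined on $\Omega\subseteq\mathbb{R}^n$ is injective with respect to $S\subseteq\mathbb{R}^n$ if $x,y\in\Omega$, $x\neq y$, $x-y\in S$ imply $g(x)\neq g(y)$ (here $\Omega=\mathbb{R}^n_+$). For $x\in\mathbb{R}^n$, $\sigma(x)\in\{-,0,+\}^n$ is the componentwise sign; for $S\subseteq\mathbb{R}^n$, $\sigma(S)=\{\sigma(x)\mid x\in S\}$, $\Sigma(S)=\sigma^{-1}(\sigma(S))$ (the set of all vectors having the sign vector of some element of $S$), and $S^*=S\setminus\{0\}$. A matrix $B$ is identified with the linear map $x\mapsto Bx$, and $B(S)=\{Bx\mid x\in S\}$. *)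

theory Defs
  imports "HOL-Analysis.Analysis"
begin

definition pos_vec :: "real^'n \<Rightarrow> bool" where
  "pos_vec x \<longleftrightarrow> (\<forall>i. x $ i > 0)"

definition diag_mat :: "real^'n \<Rightarrow> real^'n^'n" where
  "diag_mat v = (\<chi> i j. if i = j then v $ i else 0)"

definition monomials :: "real^'n \<Rightarrow> real^'n^'r \<Rightarrow> real^'r" where
  "monomials x B = (\<chi> j. \<Prod>i\<in>UNIV. (x $ i) powr (B $ j $ i))"

definition gmap :: "real^'r^'m \<Rightarrow> real^'n^'r \<Rightarrow> real^'r \<Rightarrow> real^'n \<Rightarrow> real^'m" where
  "gmap A B \<kappa> x = (A ** diag_mat \<kappa>) *v monomials x B"

definition inj_wrt :: "(real^'n \<Rightarrow> 'b) \<Rightarrow> (real^'n) set \<Rightarrow> bool" where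
  "inj_wrt g S \<longleftrightarrow> (\<forall>x y. pos_vec x \<and> pos_vec y \<and> x \<noteq> y \<and> x - y \<in> S \<longrightarrow> g x \<noteq> g y)"

text \<open>Sign vectors, encoded as real vectors with entries in {-1,0,1}.\<close>
definition sign_vec :: "real^'n \<Rightarrow> real^'n" where
  "sign_vec x = (\<chi> i. sgn (x $ i))"

definition sign_closure :: "(real^'n) set \<Rightarrow> (real^'n) set" where
  "sign_closure S = {y. \<exists>x\<in>S. sign_vec y = sign_vec x}"

definition mat_ker :: "real^'n^'m \<Rightarrow> (real^'n) set" where
  "mat_ker M = {v. M *v v = 0}"

end

theory Submission
  imports Defs
begin

text \<open>Positive diagonal scalings realise exactly the vectors with a prescribed sign vector.
  Hence \<open>ker(A\<^sub>\<kappa>B\<^sub>\<lambda>)\<close> meets \<open>S\<^sup>*\<close> for some \<open>\<kappa>, \<lambda> > 0\<close> exactly when the sign condition fails,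
  and the Jacobian \<open>A diag(\<kappa> x\<^sup>B) B diag(1/x)\<close> is such a product, every pair of positive
  scalings arising in this way. For injectivity pass to logarithmic coordinates: \<open>x\<^sup>B - y\<^sup>B\<close> has
  the sign vector of \<open>B(ln x - ln y)\<close>, and \<open>ln x - ln y\<close> has that of \<open>x - y\<close>; conversely every
  pair \<open>z, w\<close> with equal sign vectors arises as \<open>z = x - y\<close>, \<open>w = ln x - ln y\<close> with \<open>x, y > 0\<close>.\<close>

definition vec_ln :: "real^'n \<Rightarrow> real^'n" where
  "vec_ln x = (\<chi> i. ln (x $ i))"

lemma sgn_eq_iff_pos_mult: "sgn (a::real) = sgn b \<longleftrightarrow> (\<exists>c>0. a = c * b)"
proof
  assume s: "sgn a = sgn b"
  show "\<exists>c>0. a = c * b"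
  proof (cases "b = 0")
    case True
    then show ?thesis using s by (intro exI[of _ 1]) (simp add: sgn_0_0)
  next
    case False
    then show ?thesis using s
      by (intro exI[of _ "a / b"]) (auto simp: sgn_if divide_neg_neg divide_pos_pos split: if_splits)
  qed
qed (auto simp: sgn_mult)

lemma sgn_exp_diff: "sgn (exp a - exp b) = sgn ((a::real) - b)"
  by (cases rule: linorder_cases[of a b]) auto

lemma sgn_ln_diff: "(a::real) > 0 \<Longrightarrow> b > 0 \<Longrightarrow> sgn (ln a - ln b) = sgn (a - b)"
  by (cases rule: linorder_cases[of a b]) auto

lemma exists_pos_diff_and_ln_diff:
  fixes y z :: real
  assumes "sgn y = sgn z"
  shows "\<exists>a>0. \<exists>b>0. a - b = z \<and> ln a - ln b = y"
proof (cases "z = 0")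
  case True
  then show ?thesis using assms by (intro exI[of _ 1]) (simp add: sgn_0_0)
next
  case False
  define b where "b = z / (exp y - 1)"
  have s: "sgn (exp y - 1) = sgn z" using sgn_exp_diff[of y 0] assms by simp
  then have e: "exp y - 1 \<noteq> 0" using False by (metis sgn_0_0)
  have b: "b > 0" unfolding b_def using s False e
    by (auto simp: sgn_if divide_neg_neg divide_pos_pos split: if_splits)
  have "b * exp y - b = b * (exp y - 1)" by (simp only: right_diff_distrib mult_1_right)
  also have "\<dots> = z" using e by (simp add: b_def)
  finally have "b * exp y - b = z" .
  moreover have "ln (b * exp y) - ln b = y" using b by (simp add: ln_mult)
  ultimately show ?thesis using b by (intro exI[of _ "b * exp y"] conjI exI[of _ b]) simp_all
qed

lemma pos_vec_mult: "pos_vec p \<Longrightarrow> pos_vec q \<Longrightarrow> pos_vec (p * q)"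
  by (simp add: pos_vec_def)

lemma sign_vec_eq_iff_pos_mult: "sign_vec y = sign_vec z \<longleftrightarrow> (\<exists>p. pos_vec p \<and> y = p * z)"
proof
  assume "sign_vec y = sign_vec z"
  then have "\<forall>i. \<exists>c>0. y $ i = c * z $ i"
    by (simp add: vec_eq_iff sign_vec_def sgn_eq_iff_pos_mult)
  then obtain c where "\<forall>i. c i > 0 \<and> y $ i = c i * z $ i" by metis
  then show "\<exists>p. pos_vec p \<and> y = p * z"
    by (intro exI[of _ "\<chi> i. c i"]) (simp add: pos_vec_def vec_eq_iff)
qed (auto simp: vec_eq_iff sign_vec_def sgn_mult pos_vec_def)

lemma sign_vec_pos_mult: "pos_vec p \<Longrightarrow> sign_vec (p * z) = sign_vec z"
  using sign_vec_eq_iff_pos_mult by blast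

lemma sign_condition_iff:
  "sign_vec ` mat_ker A \<inter> sign_vec ` ((\<lambda>y. B *v y) ` sign_closure T) = {} \<longleftrightarrow>
    (\<forall>u y z. A *v u = 0 \<longrightarrow> z \<in> T \<longrightarrow> sign_vec y = sign_vec z \<longrightarrow> sign_vec u \<noteq> sign_vec (B *v y))"
  unfolding mat_ker_def sign_closure_def by (auto simp: image_iff; blast)

lemma sign_condition_iff_scaled_kernels:
  "sign_vec ` mat_ker A \<inter> sign_vec ` ((\<lambda>y. B *v y) ` sign_closure T) = {} \<longleftrightarrow>
    (\<forall>\<kappa> l z. pos_vec \<kappa> \<and> pos_vec l \<and> z \<in> T \<longrightarrow> A *v (\<kappa> * (B *v (l * z))) \<noteq> 0)"
  unfolding sign_condition_iff sign_vec_eq_iff_pos_mult by blast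

lemma monomials_eq_exp:
  "pos_vec x \<Longrightarrow> monomials x B $ j = exp ((B *v vec_ln x) $ j)"
  by (simp add: monomials_def vec_ln_def powr_def pos_vec_def exp_sum matrix_vector_mult_def
      less_imp_neq[symmetric] mult.commute)

lemma pos_vec_monomials: "pos_vec x \<Longrightarrow> pos_vec (monomials x B)"
  by (simp add: pos_vec_def monomials_eq_exp)

lemma sign_vec_monomials_diff:
  assumes "pos_vec x" "pos_vec y"
  shows "sign_vec (monomials x B - monomials y B) = sign_vec (B *v (vec_ln x - vec_ln y))"
  using assms by (simp add: vec_eq_iff sign_vec_def monomials_eq_exp sgn_exp_diff
      matrix_vector_mult_diff_distrib)

lemma sign_vec_ln_diff:
  "pos_vec x \<Longrightarrow> pos_vec y \<Longrightarrow> sign_vec (vec_ln x - vec_ln y) = sign_vec (x - y)"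
  by (simp add: vec_eq_iff sign_vec_def vec_ln_def sgn_ln_diff pos_vec_def)

lemma exists_pos_vec_diff_and_ln_diff:
  assumes "sign_vec w = sign_vec z"
  shows "\<exists>x y. pos_vec x \<and> pos_vec y \<and> x - y = z \<and> vec_ln x - vec_ln y = w"
proof -
  have "\<forall>i. \<exists>a>0. \<exists>b>0. a - b = z $ i \<and> ln a - ln b = w $ i"
    using assms by (simp add: vec_eq_iff sign_vec_def exists_pos_diff_and_ln_diff)
  then obtain a b where "\<forall>i. a i > 0 \<and> b i > 0 \<and> a i - b i = z $ i \<and> ln (a i) - ln (b i) = w $ i"
    by metis
  then show ?thesis
    by (intro exI[of _ "\<chi> i. a i"] exI[of _ "\<chi> i. b i"])
      (simp add: pos_vec_def vec_eq_iff vec_ln_def)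
qed

lemma has_derivative_monomials:
  fixes x :: "real^'n" and B :: "real^'n^'r"
  assumes pos: "pos_vec x"
  shows "((\<lambda>y. monomials y B) has_derivative
           (\<lambda>v. monomials x B * (B *v ((\<chi> i. 1 / x $ i) * v)))) (at x)"
proof -
  have component: "((\<lambda>y. monomials y B $ j) has_derivative
     (\<lambda>v. monomials x B $ j * (\<Sum>i\<in>UNIV. B$j$i * (v$i / x$i)))) (at x)" for j
  proof -
    have "((\<lambda>y. (y$i) powr (B$j$i)) has_derivative
       (\<lambda>v. (x$i) powr (B$j$i) * (0 * ln (x$i) + v$i * (B$j$i) / x$i))) (at x)" for i
      using pos by (intro has_derivative_powr bounded_linear_imp_has_derivative
          bounded_linear_vec_nth has_derivative_const) (auto simp: pos_vec_def)
    then have "((\<lambda>y. \<Prod>i\<in>UNIV. (y$i) powr (B$j$i)) has_derivative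
       (\<lambda>v. \<Sum>i\<in>UNIV. (x$i) powr (B$j$i) * (0 * ln (x$i) + v$i * (B$j$i) / x$i) *
           (\<Prod>k\<in>UNIV - {i}. (x$k) powr (B$j$k)))) (at x)"
      by (rule has_derivative_prod)
    moreover have "(x$i) powr (B$j$i) * (0 * ln (x$i) + v$i * (B$j$i) / x$i) *
           (\<Prod>k\<in>UNIV - {i}. (x$k) powr (B$j$k)) =
        (\<Prod>k\<in>UNIV. (x$k) powr (B$j$k)) * (B$j$i * (v$i / x$i))" for i v
      by (subst prod.remove[of UNIV i]) auto
    then have "(\<lambda>v. \<Sum>i\<in>UNIV. (x$i) powr (B$j$i) * (0 * ln (x$i) + v$i * (B$j$i) / x$i) *
           (\<Prod>k\<in>UNIV - {i}. (x$k) powr (B$j$k))) =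
        (\<lambda>v. monomials x B $ j * (\<Sum>i\<in>UNIV. B$j$i * (v$i / x$i)))"
      unfolding monomials_def vec_lambda_beta sum_distrib_left by presburger
    ultimately show ?thesis by (simp only: monomials_def vec_lambda_beta)
  qed
  show ?thesis
  proof (rule iffD2[OF has_derivative_componentwise_within[where S=UNIV, simplified]], rule ballI)
    fix b :: "real^'r" assume "b \<in> Basis"
    then obtain j where b: "b = axis j 1" by (auto simp: Basis_vec_def)
    show "((\<lambda>y. monomials y B \<bullet> b) has_derivative
          (\<lambda>v. (monomials x B * (B *v ((\<chi> i. 1 / x $ i) * v))) \<bullet> b)) (at x)"
      unfolding b inner_axis using component[of j]
      by (simp add: matrix_vector_mult_def)
  qed
qed

lemma diag_mat_mult_vec: "diag_mat p *v w = p * w"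
proof -
  have "(\<Sum>j\<in>UNIV. (if i = j then p $ i else 0) * w $ j) = p $ i * w $ i" for i
    by (simp add: if_distrib[of "\<lambda>t. t * w $ _"] cong: if_cong)
  then show ?thesis by (simp add: vec_eq_iff diag_mat_def matrix_vector_mult_def)
qed

lemma gmap_eq: "gmap A B \<kappa> x = A *v (\<kappa> * monomials x B)"
  by (simp add: gmap_def matrix_vector_mul_assoc[symmetric] diag_mat_mult_vec)

lemma mat_ker_scaled_product:
  "mat_ker ((A ** diag_mat \<kappa>) ** (B ** diag_mat l)) = {v. A *v (\<kappa> * (B *v (l * v))) = 0}"
  by (simp add: mat_ker_def matrix_vector_mul_assoc[symmetric] diag_mat_mult_vec)

lemma mat_ker_jacobian_gmap:
  fixes A :: "real^'r^'m" and B :: "real^'n^'r"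
  assumes "pos_vec x"
  shows "mat_ker (jacobian (gmap A B \<kappa>) (at x)) =
    {v. A *v (\<kappa> * monomials x B * (B *v ((\<chi> i. 1 / x $ i) * v))) = 0}"
proof -
  have D: "(gmap A B \<kappa> has_derivative
      (\<lambda>v. (A ** diag_mat \<kappa>) *v (monomials x B * (B *v ((\<chi> i. 1 / x $ i) * v))))) (at x)"
    unfolding gmap_def
    by (rule bounded_linear.has_derivative[OF matrix_vector_mul_bounded_linear
          has_derivative_monomials[OF assms]])
  then have "(\<lambda>v. jacobian (gmap A B \<kappa>) (at x) *v v) =
      (\<lambda>v. (A ** diag_mat \<kappa>) *v (monomials x B * (B *v ((\<chi> i. 1 / x $ i) * v))))"
    by (intro has_derivative_unique[OF iffD1[OF jacobian_works] D] differentiableI)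
  then show ?thesis
    by (simp add: mat_ker_def matrix_vector_mul_assoc[symmetric] diag_mat_mult_vec mult.assoc)
qed

lemma pos_scalings_as_jacobian_scalings:
  assumes "pos_vec \<kappa>" "pos_vec l"
  obtains \<kappa>' x where "pos_vec \<kappa>'" "pos_vec x" "\<kappa>' * monomials x B = \<kappa>" "(\<chi> i. 1 / x $ i) = l"
proof
  let ?x = "\<chi> i. 1 / l $ i"
  show x: "pos_vec ?x" using assms by (simp add: pos_vec_def)
  have m: "monomials ?x B $ j > 0" for j using pos_vec_monomials[OF x, of B] by (simp add: pos_vec_def)
  show "pos_vec (\<chi> j. \<kappa> $ j / monomials ?x B $ j)" using assms m by (simp add: pos_vec_def)
  show "(\<chi> j. \<kappa> $ j / monomials ?x B $ j) * monomials ?x B = \<kappa>"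
    using m by (simp add: vec_eq_iff less_imp_neq[symmetric])
  show "(\<chi> i. 1 / ?x $ i) = l" by (simp add: vec_eq_iff)
qed

lemma jacobian_kernels_iff_scaled_kernels:
  fixes A :: "real^'r^'m" and B :: "real^'n^'r"
  shows "(\<forall>\<kappa> x. pos_vec \<kappa> \<and> pos_vec x \<longrightarrow>
            mat_ker (jacobian (gmap A B \<kappa>) (at x)) \<inter> T = {}) \<longleftrightarrow>
         (\<forall>\<kappa> l. pos_vec \<kappa> \<and> pos_vec l \<longrightarrow>
            mat_ker ((A ** diag_mat \<kappa>) ** (B ** diag_mat l)) \<inter> T = {})"
  (is "?jac \<longleftrightarrow> ?lin")
proof
  assume jac: ?jac
  show ?lin
  proof (intro allI impI)
    fix \<kappa> :: "real^'r" and l :: "real^'n" assume "pos_vec \<kappa> \<and> pos_vec l"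
    then obtain \<kappa>' x where "pos_vec \<kappa>'" "pos_vec x"
      and \<kappa>: "\<kappa>' * monomials x B = \<kappa>" and l: "(\<chi> i. 1 / x $ i) = l"
      by (blast elim: pos_scalings_as_jacobian_scalings)
    then have "mat_ker ((A ** diag_mat \<kappa>) ** (B ** diag_mat l)) =
        mat_ker (jacobian (gmap A B \<kappa>') (at x))"
      by (simp add: mat_ker_scaled_product mat_ker_jacobian_gmap flip: \<kappa> l)
    then show "mat_ker ((A ** diag_mat \<kappa>) ** (B ** diag_mat l)) \<inter> T = {}"
      using jac \<open>pos_vec \<kappa>'\<close> \<open>pos_vec x\<close> by simp
  qed
next
  assume lin: ?lin
  show ?jac
  proof (intro allI impI)
    fix \<kappa> :: "real^'r" and x :: "real^'n" assume \<kappa>x: "pos_vec \<kappa> \<and> pos_vec x"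
    then have "mat_ker (jacobian (gmap A B \<kappa>) (at x)) =
        mat_ker ((A ** diag_mat (\<kappa> * monomials x B)) ** (B ** diag_mat (\<chi> i. 1 / x $ i)))"
      by (simp add: mat_ker_scaled_product mat_ker_jacobian_gmap)
    moreover have "pos_vec (\<kappa> * monomials x B)" "pos_vec (\<chi> i. 1 / x $ i)"
      using \<kappa>x by (simp_all add: pos_vec_mult pos_vec_monomials) (simp add: pos_vec_def)
    ultimately show "mat_ker (jacobian (gmap A B \<kappa>) (at x)) \<inter> T = {}"
      using lin by simp
  qed
qed

lemma scaled_kernels_iff_sign_condition:
  "(\<forall>\<kappa> l. pos_vec \<kappa> \<and> pos_vec l \<longrightarrow>
      mat_ker ((A ** diag_mat \<kappa>) ** (B ** diag_mat l)) \<inter> T = {}) \<longleftrightarrow>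
   sign_vec ` mat_ker A \<inter> sign_vec ` ((\<lambda>y. B *v y) ` sign_closure T) = {}"
  unfolding sign_condition_iff_scaled_kernels mat_ker_scaled_product by blast

lemma injective_iff_sign_condition:
  fixes A :: "real^'r^'m" and B :: "real^'n^'r"
  shows "(\<forall>\<kappa>. pos_vec \<kappa> \<longrightarrow> inj_wrt (gmap A B \<kappa>) S) \<longleftrightarrow>
    sign_vec ` mat_ker A \<inter> sign_vec ` ((\<lambda>y. B *v y) ` sign_closure (S - {0})) = {}"
  unfolding sign_condition_iff
proof (intro iffI allI impI notI)
  fix u w z
  assume inj: "\<forall>\<kappa>. pos_vec \<kappa> \<longrightarrow> inj_wrt (gmap A B \<kappa>) S"
    and Au: "A *v u = 0" and z: "z \<in> S - {0}"
    and wz: "sign_vec w = sign_vec z" and uw: "sign_vec u = sign_vec (B *v w)"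
  obtain x y where x: "pos_vec x" and y: "pos_vec y" and "x - y = z" and "vec_ln x - vec_ln y = w"
    using exists_pos_vec_diff_and_ln_diff[OF wz] by blast
  then have "sign_vec u = sign_vec (monomials x B - monomials y B)"
    using uw sign_vec_monomials_diff by metis
  then obtain \<kappa> where \<kappa>: "pos_vec \<kappa>" and "u = \<kappa> * (monomials x B - monomials y B)"
    using sign_vec_eq_iff_pos_mult by blast
  then have "gmap A B \<kappa> x = gmap A B \<kappa> y"
    using Au by (simp add: gmap_eq right_diff_distrib matrix_vector_mult_diff_distrib)
  then show False
    using inj \<kappa> x y \<open>x - y = z\<close> z unfolding inj_wrt_def by auto
next
  fix \<kappa> :: "real^'r"
  assume sig: "\<forall>u w z. A *v u = 0 \<longrightarrow> z \<in> S - {0} \<longrightarrow> sign_vec w = sign_vec z \<longrightarrow>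
                  sign_vec u \<noteq> sign_vec (B *v w)"
    and \<kappa>: "pos_vec \<kappa>"
  show "inj_wrt (gmap A B \<kappa>) S"
    unfolding inj_wrt_def
  proof (intro allI impI notI)
    fix x y assume xy: "pos_vec x \<and> pos_vec y \<and> x \<noteq> y \<and> x - y \<in> S"
      and eq: "gmap A B \<kappa> x = gmap A B \<kappa> y"
    let ?u = "\<kappa> * (monomials x B - monomials y B)"
    have "A *v ?u = 0"
      using eq by (simp add: gmap_eq right_diff_distrib matrix_vector_mult_diff_distrib)
    moreover have "sign_vec ?u = sign_vec (B *v (vec_ln x - vec_ln y))"
      using sign_vec_pos_mult[OF \<kappa>] sign_vec_monomials_diff xy by metis
    moreover have "sign_vec (vec_ln x - vec_ln y) = sign_vec (x - y)"
      using sign_vec_ln_diff xy by blast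
    moreover have "x - y \<in> S - {0}" using xy by simp
    ultimately show False using sig by blast
  qed
qed

theorem theorem1:
  fixes A :: "real^'r^'m" and B :: "real^'n^'r" and S :: "(real^'n) set"
  defines "inj_c \<equiv> (\<forall>\<kappa>. pos_vec \<kappa> \<longrightarrow> inj_wrt (gmap A B \<kappa>) S)"
      and "jac_c \<equiv> (\<forall>\<kappa> x. pos_vec \<kappa> \<and> pos_vec x \<longrightarrow>
                 mat_ker (jacobian (gmap A B \<kappa>) (at x)) \<inter> (S - {0}) = {})"
      and "lin_c \<equiv> (\<forall>\<kappa> l. pos_vec \<kappa> \<and> pos_vec l \<longrightarrow>
                 mat_ker ((A ** diag_mat \<kappa>) ** (B ** diag_mat l)) \<inter> (S - {0}) = {})"
      and "sig_c \<equiv> (sign_vec ` mat_ker A \<inter>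
                 sign_vec ` ((\<lambda>y. B *v y) ` sign_closure (S - {0})) = {})"
  shows "(inj_c \<longleftrightarrow> jac_c) \<and> (jac_c \<longleftrightarrow> lin_c) \<and> (lin_c \<longleftrightarrow> sig_c)"
proof -
  have "inj_c \<longleftrightarrow> sig_c" unfolding inj_c_def sig_c_def by (rule injective_iff_sign_condition)
  moreover have "jac_c \<longleftrightarrow> lin_c"
    unfolding jac_c_def lin_c_def by (rule jacobian_kernels_iff_scaled_kernels)
  moreover have "lin_c \<longleftrightarrow> sig_c"
    unfolding lin_c_def sig_c_def by (rule scaled_kernels_iff_sign_condition)
  ultimately show ?thesis by blast
qed

end
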